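(* For $d\in[0,D]$, let $U(d)$ be the optimal value of \[ \min_{\{E_n\},\{t_n\}} \ \sum_{n=1}^N E_n\left(1+\frac{h_n}{g_n}\right) \] subject to \[ d\le \sum_{n=1}^N t_n W\ln\left(1+\frac{E_n h_n}{t_n\sigma^2 W}\right),\qquad 2\sum_{n=1}^N t_n\le T-\frac{Ld}{f_B},\qquad E_n\ge 0,\ t_n\ge 0\ \ \forall n. \] Equivalently, $U(d)$ is the optimal value of \[ \min_{\{E_n\ge0\}} \sum_{n=1}^N E_n\left(1+\frac{h_n}{g_n}\right)\quad \text{s.t.}\quad \sum_{n=1}^N E_nh_n\ge \frac12\sigma^2W\left(T-\frac{Ld}{f_B}\right)\left(e^{\frac{2d}{W(T-Ld/f_B)}}-1\right). \] Then the problem \[ \min_{0\le d\le D}\ U(d)+\frac{\kappa L^3(D-d)^3}{T^2} \] is a convex optimization problem, i.e., its objective is a convex function of $d$.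
   Context: All parameters $N, h_n, g_n, W, \sigma^2, \kappa, L, D, T, f_B$ are given positive constants, and $n$ ranges over $\{1,\dots,N\}$. The term $t_n W\ln\left(1+\frac{E_n h_n}{t_n\sigma^2W}\right)$ is interpreted as $0$ when $t_n=0$. Here $d$ ranges over values with $Ld\le f_BT$; the value $U(d)$ is understood as $+\infty$ when the inner problem is infeasible. *)

theory Defs
  imports "HOL-Analysis.Analysis"
begin

definition rate_term :: "real \<Rightarrow> real \<Rightarrow> real \<Rightarrow> real \<Rightarrow> real \<Rightarrow> real" where
  "rate_term W \<sigma> h E t = (if t = 0 then 0 else t * W * ln (1 + E * h / (t * \<sigma>^2 * W)))"

text \<open>Optimal value U(d) of the inner problem (extended real; Inf of the empty set is +infinity).\<close>
definition U_val :: "nat \<Rightarrow> (nat \<Rightarrow> real) \<Rightarrow> (nat \<Rightarrow> real) \<Rightarrow> real \<Rightarrow> real \<Rightarrow> real \<Rightarrow> real \<Rightarrow> real \<Rightarrow> real \<Rightarrow> ereal" where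
  "U_val N h g W \<sigma> L T f\<^sub>B d =
     Inf { ereal (\<Sum>n\<in>{1..N}. E n * (1 + h n / g n)) | E t.
            (\<forall>n\<in>{1..N}. E n \<ge> 0 \<and> t n \<ge> 0) \<and>
            d \<le> (\<Sum>n\<in>{1..N}. rate_term W \<sigma> (h n) (E n) (t n)) \<and>
            2 * (\<Sum>n\<in>{1..N}. t n) \<le> T - L * d / f\<^sub>B }"

definition ereal_convex_on :: "real set \<Rightarrow> (real \<Rightarrow> ereal) \<Rightarrow> bool" where
  "ereal_convex_on S F \<longleftrightarrow> convex S \<and>
     (\<forall>x\<in>S. \<forall>y\<in>S. \<forall>u::real. 0 < u \<and> u < 1 \<longrightarrow>
        F (u * x + (1 - u) * y) \<le> ereal u * F x + ereal (1 - u) * F y)"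

end

theory Submission
  imports Defs
begin

text \<open>The rate term is the perspective \<open>t \<cdot> W ln (1 + c E / t)\<close> of a concave function, hence
  jointly concave in \<open>(E, t)\<close>. The inner problem therefore has a linear objective and constraints
  that are jointly convex in \<open>(d, E, t)\<close>: mixing feasible allocations for \<open>d\<^sub>1\<close> and \<open>d\<^sub>2\<close> gives a
  feasible allocation for the mixed \<open>d\<close> at the mixed cost, so the value function \<open>U\<close> is convex
  (as an extended real function, \<open>U = \<infinity>\<close> where the inner problem is infeasible). The remaining term is a nonnegative multiple of \<open>(D - d)\<^sup>3\<close>, which is
  convex for \<open>d \<le> D\<close>.\<close>

lemma rate_term_eq:
  "t \<noteq> 0 \<Longrightarrow> rate_term W \<sigma> h E t = W * (t * ln (1 + h / (\<sigma>\<^sup>2 * W) * (E / t)))"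
  by (simp add: rate_term_def field_simps)

lemma rate_term_scale:
  assumes "0 \<le> c"
  shows "rate_term W \<sigma> h (c * E) (c * t) = c * rate_term W \<sigma> h E t"
  using assms by (auto simp: rate_term_def mult.assoc)

lemma rate_term_mono:
  assumes "0 \<le> W" "0 \<le> h" "0 \<le> E" "E \<le> E'" "0 \<le> t"
  shows "rate_term W \<sigma> h E t \<le> rate_term W \<sigma> h E' t"
proof (cases "t = 0")
  case False
  define c where "c = h / (\<sigma>\<^sup>2 * W)"
  have "0 \<le> c" using assms by (simp add: c_def)
  have "c * (E / t) \<le> c * (E' / t)" "0 \<le> c * (E / t)"
    using assms \<open>0 \<le> c\<close> by (simp_all add: divide_right_mono mult_left_mono)
  then have "ln (1 + c * (E / t)) \<le> ln (1 + c * (E' / t))"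
    by simp
  with assms False show ?thesis
    by (simp add: rate_term_eq c_def mult_left_mono)
qed (simp add: rate_term_def)

lemma rate_term_superadditive:
  assumes "0 \<le> W" "0 \<le> h" "0 \<le> E\<^sub>1" "0 \<le> E\<^sub>2" "0 \<le> t\<^sub>1" "0 \<le> t\<^sub>2"
  shows "rate_term W \<sigma> h E\<^sub>1 t\<^sub>1 + rate_term W \<sigma> h E\<^sub>2 t\<^sub>2
           \<le> rate_term W \<sigma> h (E\<^sub>1 + E\<^sub>2) (t\<^sub>1 + t\<^sub>2)"
proof -
  consider "t\<^sub>1 = 0" | "t\<^sub>2 = 0" | "0 < t\<^sub>1" "0 < t\<^sub>2"
    using assms by linarith
  then show ?thesis
  proof cases
    case 1
    then show ?thesis
      using assms rate_term_mono[of W h E\<^sub>2 "E\<^sub>1 + E\<^sub>2" t\<^sub>2] by (simp add: rate_term_def)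
  next
    case 2
    then show ?thesis
      using assms rate_term_mono[of W h E\<^sub>1 "E\<^sub>1 + E\<^sub>2" t\<^sub>1] by (simp add: rate_term_def)
  next
    case 3
    define c where "c = h / (\<sigma>\<^sup>2 * W)"
    define s where "s = t\<^sub>1 + t\<^sub>2"
    define A where "A = (\<lambda>E t. 1 + c * (E / t))"
    have "0 \<le> c" "0 < s" using assms 3 by (simp_all add: c_def s_def)
    then have A_pos: "0 < A E\<^sub>1 t\<^sub>1" "0 < A E\<^sub>2 t\<^sub>2"
      using assms 3 by (simp_all add: A_def add_pos_nonneg)
    have weighted: "t\<^sub>1 / s * A E\<^sub>1 t\<^sub>1 + t\<^sub>2 / s * A E\<^sub>2 t\<^sub>2 = A (E\<^sub>1 + E\<^sub>2) s"
      using 3 \<open>0 < s\<close> by (simp add: A_def field_simps) (simp add: s_def algebra_simps)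
    have "t\<^sub>1 / s * ln (A E\<^sub>1 t\<^sub>1) + t\<^sub>2 / s * ln (A E\<^sub>2 t\<^sub>2) \<le> ln (A (E\<^sub>1 + E\<^sub>2) s)"
      unfolding weighted[symmetric]
      by (rule ln_concave[unfolded concave_on_iff real_scaleR_def, THEN conjunct2, rule_format])
        (use A_pos 3 \<open>0 < s\<close> in \<open>auto simp: s_def add_divide_distrib[symmetric]\<close>)
    then have "t\<^sub>1 * ln (A E\<^sub>1 t\<^sub>1) + t\<^sub>2 * ln (A E\<^sub>2 t\<^sub>2) \<le> s * ln (A (E\<^sub>1 + E\<^sub>2) s)"
      using \<open>0 < s\<close> by (simp add: field_simps)
    then show ?thesis
      using assms 3 \<open>0 < s\<close>
      by (simp add: rate_term_eq A_def c_def s_def flip: distrib_left) (simp add: mult_left_mono)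
  qed
qed

lemma concave_on_rate_term:
  assumes "0 \<le> W" "0 \<le> h"
  shows "concave_on ({0..} \<times> {0..}) (\<lambda>(E, t). rate_term W \<sigma> h E t)"
  unfolding concave_on_iff
proof (intro conjI ballI allI impI)
  show "convex ({0::real..} \<times> {0::real..})"
    by (simp add: convex_Times)
next
  fix p q :: "real \<times> real" and u v :: real
  assume "p \<in> {0..} \<times> {0..}" "q \<in> {0..} \<times> {0..}" "0 \<le> u" "0 \<le> v" "u + v = 1"
  then show "u * (case p of (E, t) \<Rightarrow> rate_term W \<sigma> h E t) + v * (case q of (E, t) \<Rightarrow> rate_term W \<sigma> h E t)
      \<le> (case u *\<^sub>R p + v *\<^sub>R q of (E, t) \<Rightarrow> rate_term W \<sigma> h E t)"
    using assms rate_term_superadditive[of W h "u * fst p" "v * fst q" "u * snd p" "v * snd q" \<sigma>]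
    by (cases p, cases q) (simp add: rate_term_scale)
qed

lemma sum_rate_term_concave:
  assumes "0 \<le> W" "\<forall>n\<in>A. 0 \<le> h n" "0 \<le> u" "u \<le> 1"
    and "\<forall>n\<in>A. 0 \<le> E n \<and> 0 \<le> t n" "\<forall>n\<in>A. 0 \<le> E' n \<and> 0 \<le> t' n"
  shows "u * (\<Sum>n\<in>A. rate_term W \<sigma> (h n) (E n) (t n))
           + (1 - u) * (\<Sum>n\<in>A. rate_term W \<sigma> (h n) (E' n) (t' n))
         \<le> (\<Sum>n\<in>A. rate_term W \<sigma> (h n) (u * E n + (1 - u) * E' n) (u * t n + (1 - u) * t' n))"
proof -
  have "u * rate_term W \<sigma> (h n) (E n) (t n) + (1 - u) * rate_term W \<sigma> (h n) (E' n) (t' n)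
      \<le> rate_term W \<sigma> (h n) (u * E n + (1 - u) * E' n) (u * t n + (1 - u) * t' n)" if "n \<in> A" for n
    using concave_onD[OF concave_on_rate_term[of W "h n" \<sigma>], of "1 - u" "(E n, t n)" "(E' n, t' n)"]
      assms that by simp
  then show ?thesis
    by (simp add: sum_distrib_left flip: sum.distrib) (rule sum_mono)
qed

lemma ereal_convex_on_Inf:
  fixes f :: "'a \<Rightarrow> real" and P :: "real \<Rightarrow> 'a \<Rightarrow> bool"
  assumes "convex S"
    and nonneg: "\<And>d z. P d z \<Longrightarrow> 0 \<le> f z"
    and combine: "\<And>x y u a b. 0 < u \<Longrightarrow> u < 1 \<Longrightarrow> P x a \<Longrightarrow> P y b \<Longrightarrow>
                    \<exists>c. P (u * x + (1 - u) * y) c \<and> f c \<le> u * f a + (1 - u) * f b"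
  shows "ereal_convex_on S (\<lambda>d. Inf {ereal (f z) | z. P d z})"
  unfolding ereal_convex_on_def
proof (intro conjI ballI allI impI)
  define V where "V d = Inf {ereal (f z) | z. P d z}" for d
  have V_nonneg: "0 \<le> V d" for d
    unfolding V_def by (rule Inf_greatest) (auto intro: nonneg)
  have V_le: "V d \<le> ereal (f z)" if "P d z" for d z
    unfolding V_def by (rule Inf_lower) (use that in blast)
  have V_lessE: "\<exists>z. P d z \<and> f z < r" if "V d < ereal r" for d r
    using that unfolding V_def Inf_less_iff by auto
  fix x y u :: real
  assume u: "0 < u \<and> u < 1"
  show "V (u * x + (1 - u) * y) \<le> ereal u * V x + ereal (1 - u) * V y"
  proof (cases "V x = \<infinity> \<or> V y = \<infinity>")
    case True
    then have "ereal u * V x + ereal (1 - u) * V y = \<infinity>"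
      using u V_nonneg[of x] V_nonneg[of y] by auto
    then show ?thesis by (simp only: ereal_less_eq(1))
  next
    case False
    then obtain a b where a: "V x = ereal a" and b: "V y = ereal b"
      using V_nonneg[of x] V_nonneg[of y] by (cases "V x"; cases "V y") auto
    have "V (u * x + (1 - u) * y) \<le> ereal (u * a + (1 - u) * b) + ereal e" if "0 < e" for e
    proof -
      obtain za zb where za: "P x za" "f za < a + e" and zb: "P y zb" "f zb < b + e"
        using V_lessE[of x "a + e"] V_lessE[of y "b + e"] a b \<open>0 < e\<close> by auto
      then obtain c where c: "P (u * x + (1 - u) * y) c" "f c \<le> u * f za + (1 - u) * f zb"
        using combine u by blast
      have "u * f za + (1 - u) * f zb \<le> u * (a + e) + (1 - u) * (b + e)"
        using za zb u by (intro add_mono mult_left_mono) auto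
      then have "f c \<le> u * a + (1 - u) * b + e"
        using c by (simp add: algebra_simps)
      then show ?thesis
        using V_le[OF c(1)] by (simp add: order_trans)
    qed
    then have "V (u * x + (1 - u) * y) \<le> ereal (u * a + (1 - u) * b)"
      by (rule ereal_le_epsilon2)
    then show ?thesis by (simp add: a b)
  qed
qed (fact \<open>convex S\<close>)

lemma ereal_convex_on_add:
  assumes "ereal_convex_on S F" "\<And>x. x \<in> S \<Longrightarrow> F x \<noteq> -\<infinity>" "convex_on S c"
  shows "ereal_convex_on S (\<lambda>x. F x + ereal (c x))"
  unfolding ereal_convex_on_def
proof (intro conjI ballI allI impI)
  show "convex S" using assms(1) by (simp add: ereal_convex_on_def)
  fix x y u :: real
  assume xy: "x \<in> S" "y \<in> S" and u: "0 < u \<and> u < 1"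
  have "F (u * x + (1 - u) * y) \<le> ereal u * F x + ereal (1 - u) * F y"
    using assms(1) xy u by (simp add: ereal_convex_on_def)
  moreover have "c (u * x + (1 - u) * y) \<le> u * c x + (1 - u) * c y"
    using convex_onD[OF assms(3), of "1 - u" x y] xy u by (simp add: algebra_simps)
  ultimately have "F (u * x + (1 - u) * y) + ereal (c (u * x + (1 - u) * y))
      \<le> (ereal u * F x + ereal (1 - u) * F y) + (ereal (u * c x) + ereal ((1 - u) * c y))"
    by (intro add_mono) auto
  also have "\<dots> = (ereal u * F x + ereal (u * c x)) + (ereal (1 - u) * F y + ereal ((1 - u) * c y))"
    by (simp only: ac_simps)
  also have "\<dots> = ereal u * (F x + ereal (c x)) + ereal (1 - u) * (F y + ereal (c y))"
    using assms(2) xy by (simp add: ereal_distrib_left)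
  finally show "F (u * x + (1 - u) * y) + ereal (c (u * x + (1 - u) * y))
      \<le> ereal u * (F x + ereal (c x)) + ereal (1 - u) * (F y + ereal (c y))" .
qed

lemma convex_on_power_diff:
  fixes a :: real
  shows "convex_on {..a} (\<lambda>x. (a - x) ^ n)"
proof (rule convex_onI)
  have "convex_on {0::real..} (\<lambda>x. x ^ n)"
    using convex_power_odd[of n] convex_on_subset[OF convex_power_even[of n]]
    by (cases "even n") auto
  fix t x y :: real
  assume "0 < t" "t < 1" "x \<in> {..a}" "y \<in> {..a}"
  then have "((1 - t) * (a - x) + t * (a - y)) ^ n \<le> (1 - t) * (a - x) ^ n + t * (a - y) ^ n"
    using convex_onD[OF \<open>convex_on {0..} _\<close>, of t "a - x" "a - y"] by simp
  then show "(a - ((1 - t) *\<^sub>R x + t *\<^sub>R y)) ^ n \<le> (1 - t) * (a - x) ^ n + t * (a - y) ^ n"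
    by (simp add: algebra_simps)
qed (rule convex_real_interval)

lemma U_val_nonneg:
  assumes "\<forall>n\<in>{1..N}. 0 \<le> h n" "\<forall>n\<in>{1..N}. 0 < g n"
  shows "0 \<le> U_val N h g W \<sigma> L T f\<^sub>B d"
  unfolding U_val_def
  using assms
  by (intro Inf_greatest) (auto intro!: sum_nonneg mult_nonneg_nonneg add_nonneg_nonneg divide_nonneg_pos)

lemma ereal_convex_on_U_val:
  assumes "convex S" "0 \<le> W" "\<forall>n\<in>{1..N}. 0 \<le> h n" "\<forall>n\<in>{1..N}. 0 < g n"
  shows "ereal_convex_on S (U_val N h g W \<sigma> L T f\<^sub>B)"
proof -
  define rate where "rate E t = (\<Sum>n\<in>{1..N}. rate_term W \<sigma> (h n) (E n) (t n))" for E t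
  define cost :: "(nat \<Rightarrow> real) \<times> (nat \<Rightarrow> real) \<Rightarrow> real"
    where "cost = (\<lambda>(E, t). \<Sum>n\<in>{1..N}. E n * (1 + h n / g n))"
  define feasible where "feasible d = (\<lambda>(E, t). (\<forall>n\<in>{1..N}. 0 \<le> E n \<and> 0 \<le> t n) \<and>
      d \<le> rate E t \<and> 2 * (\<Sum>n\<in>{1..N}. t n) \<le> T - L * d / f\<^sub>B)" for d
  have U_val_eq: "U_val N h g W \<sigma> L T f\<^sub>B = (\<lambda>d. Inf {ereal (cost z) | z. feasible d z})"
    unfolding U_val_def cost_def feasible_def rate_def by (intro ext arg_cong[where f = Inf]) auto
  show ?thesis
    unfolding U_val_eq
  proof (rule ereal_convex_on_Inf[OF \<open>convex S\<close>])
    show "0 \<le> cost z" if "feasible d z" for d z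
      using that assms
      by (auto simp: feasible_def cost_def intro!: sum_nonneg mult_nonneg_nonneg add_nonneg_nonneg)
  next
    fix x y u :: real and a b :: "(nat \<Rightarrow> real) \<times> (nat \<Rightarrow> real)"
    assume u: "0 < u" "u < 1" and feasible: "feasible x a" "feasible y b"
    obtain E t E' t' where ab: "a = (E, t)" "b = (E', t')" by fastforce
    define mix where "mix p q n = u * p n + (1 - u) * q n" for p q :: "nat \<Rightarrow> real" and n
    have "u * x + (1 - u) * y \<le> u * rate E t + (1 - u) * rate E' t'"
      using feasible u by (intro add_mono mult_left_mono) (auto simp: ab feasible_def)
    also have "\<dots> \<le> rate (mix E E') (mix t t')"
      unfolding rate_def mix_def
      using feasible u assms by (intro sum_rate_term_concave) (auto simp: ab feasible_def)
    finally have "u * x + (1 - u) * y \<le> rate (mix E E') (mix t t')" .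
    moreover have "2 * (\<Sum>n\<in>{1..N}. mix t t' n)
        = u * (2 * (\<Sum>n\<in>{1..N}. t n)) + (1 - u) * (2 * (\<Sum>n\<in>{1..N}. t' n))"
      unfolding mix_def sum.distrib sum_distrib_left[symmetric] by (simp add: algebra_simps)
    moreover have "\<dots> \<le> u * (T - L * x / f\<^sub>B) + (1 - u) * (T - L * y / f\<^sub>B)"
      using feasible u by (intro add_mono mult_left_mono) (auto simp: ab feasible_def)
    moreover have "\<dots> = T - L * (u * x + (1 - u) * y) / f\<^sub>B"
      by (simp add: algebra_simps add_divide_distrib diff_divide_distrib)
    moreover have "\<forall>n\<in>{1..N}. 0 \<le> mix E E' n \<and> 0 \<le> mix t t' n"
      using feasible u by (auto simp: ab feasible_def mix_def)
    moreover have "cost (mix E E', mix t t') = u * cost a + (1 - u) * cost b"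
      by (simp add: ab cost_def mix_def sum.distrib sum_distrib_left distrib_right mult.assoc)
    ultimately show "\<exists>c. feasible (u * x + (1 - u) * y) c \<and> cost c \<le> u * cost a + (1 - u) * cost b"
      by (intro exI[of _ "(mix E E', mix t t')"]) (simp add: feasible_def)
  qed
qed

theorem lemma4:
  fixes N :: nat and h g :: "nat \<Rightarrow> real"
    and W \<sigma> \<kappa> L D T f\<^sub>B :: real
  assumes "N > 0"
    and "\<forall>n\<in>{1..N}. h n > 0" and "\<forall>n\<in>{1..N}. g n > 0"
    and "W > 0" and "\<sigma> > 0" and "\<kappa> > 0" and "L > 0" and "D > 0" and "T > 0" and "f\<^sub>B > 0"
  shows "ereal_convex_on {d. 0 \<le> d \<and> d \<le> D \<and> L * d \<le> f\<^sub>B * T}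
           (\<lambda>d. U_val N h g W \<sigma> L T f\<^sub>B d + ereal (\<kappa> * L^3 * (D - d)^3 / T^2))"
proof (rule ereal_convex_on_add)
  let ?S = "{d. 0 \<le> d \<and> d \<le> D \<and> L * d \<le> f\<^sub>B * T}"
  have h_nonneg: "\<forall>n\<in>{1..N}. 0 \<le> h n" using assms(2) by auto
  have "?S = {0..min D (f\<^sub>B * T / L)}"
    using \<open>L > 0\<close> by (auto simp: pos_le_divide_eq mult.commute)
  then have "convex ?S" by simp
  then show "ereal_convex_on ?S (U_val N h g W \<sigma> L T f\<^sub>B)"
    using assms h_nonneg by (intro ereal_convex_on_U_val) auto
  show "U_val N h g W \<sigma> L T f\<^sub>B d \<noteq> -\<infinity>" for d
    using U_val_nonneg[OF h_nonneg assms(3), of W \<sigma> L T f\<^sub>B d] by auto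
  have "convex_on {..D} (\<lambda>d. \<kappa> * L^3 * (D - d)^3 / T^2)"
    using assms by (intro convex_on_cdiv convex_on_cmul convex_on_power_diff) auto
  then show "convex_on ?S (\<lambda>d. \<kappa> * L^3 * (D - d)^3 / T^2)"
    by (rule convex_on_subset) (auto intro: \<open>convex ?S\<close>)
qed

end
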